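(* Let $D=(V,E;s,t)$, $N$, and $\mathscr{B}$ be as in the context. For every jump $Q\in\mathscr{J}$ there exists either an $s$-$t$ path $P$ with $\mathscr{J}_P=\{Q\}$ or a cycle $C$ with $\mathscr{J}_C=\{Q\}$.
   Context: $D=(V,E;s,t)$ is a directed network with unit arc capacities (parallel arcs allowed), $N\subseteq E$, and every arc lies on some $s$-$t$ path and every $s$-$t$ path contains an arc of $N$. A path is a set of arcs joining a sequence of distinct vertices along the same direction. Two paths are disjoint on $N$ if they share no arc of $N$. Fix a maximum-cardinality family $\mathscr{B}$ of $s$-$t$ paths pairwise disjoint on $N$; a $\mathscr{B}$-vertex is a vertex on some path of $\mathscr{B}$. A $u$-$v$ jump is a $u$-$v$ path whose end vertices $u,v$ are $\mathscr{B}$-vertices, none of whose intermediate vertices is a $\mathscr{B}$-vertex, and which is not a single arc of a path of $\mathscr{B}$; $(u,v)$ is its jump pair; $\mathscr{J}$ is the set of all jumps. For an $s$-$t$ path or a cycle $W$, cut $W$ at each of its $\mathscr{B}$-vertices into consecutive pieces, each going from a $\mathscr{B}$-vertex to the next $\mathscr{B}$-vertex along $W$; $\mathscr{J}_W$ is the set of those pieces that are jumps (i.e. are not single arcs of paths of $\mathscr{B}$), so that $W=P_0*Q_1*P_1*\cdots*Q_r*P_r$ with $P_i$ (possibly empty) subpaths of paths of $\mathscr{B}$ and $\mathscr{J}_W=\{Q_1,\dots,Q_r\}$. *)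

theory Defs
  imports "Graph_Theory.Digraph" "Graph_Theory.Arc_Walk"
begin

context pre_digraph
begin

definition N_disj_family :: "'a \<Rightarrow> 'a \<Rightarrow> 'b set \<Rightarrow> 'b awalk set \<Rightarrow> bool" where
  "N_disj_family s t N B \<longleftrightarrow>
     (\<forall>P\<in>B. apath s P t) \<and> (\<forall>P\<in>B. \<forall>P'\<in>B. P \<noteq> P' \<longrightarrow> set P \<inter> set P' \<inter> N = {})"

definition max_N_disj_family :: "'a \<Rightarrow> 'a \<Rightarrow> 'b set \<Rightarrow> 'b awalk set \<Rightarrow> bool" where
  "max_N_disj_family s t N B \<longleftrightarrow> N_disj_family s t N B \<and> finite B \<and>
     (\<forall>B'. N_disj_family s t N B' \<longrightarrow> card B' \<le> card B)"

definition B_verts :: "'a \<Rightarrow> 'b awalk set \<Rightarrow> 'a set" where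
  "B_verts s B = (\<Union>P\<in>B. set (awalk_verts s P))"

definition single_B_arc :: "'b awalk set \<Rightarrow> 'b awalk \<Rightarrow> bool" where
  "single_B_arc B Q \<longleftrightarrow> (\<exists>P\<in>B. \<exists>e\<in>set P. Q = [e])"

definition jump :: "'a \<Rightarrow> 'b awalk set \<Rightarrow> 'b awalk \<Rightarrow> bool" where
  "jump s B Q \<longleftrightarrow> Q \<noteq> [] \<and> (\<exists>u v. apath u Q v \<and> u \<in> B_verts s B \<and> v \<in> B_verts s B \<and>
      (\<forall>w \<in> set (butlast (tl (awalk_verts u Q))). w \<notin> B_verts s B)) \<and>
      \<not> single_B_arc B Q"

definition B_piece :: "'a \<Rightarrow> 'b awalk set \<Rightarrow> 'b awalk \<Rightarrow> bool" where
  "B_piece s B Q \<longleftrightarrow> Q \<noteq> [] \<and> tail G (hd Q) \<in> B_verts s B \<and> head G (last Q) \<in> B_verts s B \<and>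
      (\<forall>e \<in> set (butlast Q). head G e \<notin> B_verts s B)"

definition J_path :: "'a \<Rightarrow> 'b awalk set \<Rightarrow> 'b awalk \<Rightarrow> 'b awalk set" where
  "J_path s B W = {Q. (\<exists>xs ys. W = xs @ Q @ ys) \<and> B_piece s B Q \<and> \<not> single_B_arc B Q}"

text \<open>J_C for a cycle C: the same, with segments taken cyclically (segments of rotations).\<close>
definition J_cycle :: "'a \<Rightarrow> 'b awalk set \<Rightarrow> 'b awalk \<Rightarrow> 'b awalk set" where
  "J_cycle s B C = {Q. (\<exists>k xs ys. rotate k C = xs @ Q @ ys) \<and> B_piece s B Q \<and> \<not> single_B_arc B Q}"

end

end

theory Submission
  imports Defs
begin

(* Let Q be a u-v jump, and follow a path of B from s to u and one from v to t. If these two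
   pieces are vertex-disjoint, joining them through Q gives an s-t path. Otherwise let w be the
   first vertex on the piece leaving v that also lies on the piece reaching u; the latter from w
   to u, then Q, then the former from v to w is a cycle. Either walk consists of Q and arcs of B.
   A piece of such a walk that is not a single arc of B uses no arc of B at all (an arc of B has
   B-vertices at both ends, while each arc of a piece with two or more arcs has an inner end), so
   it runs along Q from u, the only B-vertex at which an arc of Q starts, to the next B-vertex v:
   it is Q itself. *)

lemma in_set_tlD: "x \<in> set (tl xs) \<Longrightarrow> x \<in> set xs"
  by (cases xs) auto

lemma set_tl_subset_last_butlast: "set (tl xs) \<subseteq> insert (last xs) (set (butlast (tl xs)))"
proof (cases "tl xs = []")
  case False
  then have "tl xs = butlast (tl xs) @ [last xs]"
    by (metis append_butlast_last_id last_tl)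
  then have "set (tl xs) = insert (last xs) (set (butlast (tl xs)))"
    by (metis Un_insert_right empty_set list.simps(15) set_append sup_bot.right_neutral)
  then show ?thesis by simp
qed simp

context wf_digraph
begin

lemma awalk_verts_nth_tail: "i < length p \<Longrightarrow> awalk_verts u p ! i = tail G (p ! i)"
  by (auto simp: awalk_verts_conv nth_append)

lemma awalk_verts_nth_head: "cas u p v \<Longrightarrow> i < length p \<Longrightarrow> awalk_verts u p ! Suc i = head G (p ! i)"
  by (auto simp: awalk_verts_conv')

lemma awalk_verts_nth_interior:
  assumes "0 < i" "i < length p"
  shows "awalk_verts u p ! i \<in> set (butlast (tl (awalk_verts u p)))"
proof -
  have "butlast (tl (awalk_verts u p)) ! (i - 1) = awalk_verts u p ! i"
    using assms by (simp add: length_awalk_verts nth_butlast nth_tl)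
  moreover have "i - 1 < length (butlast (tl (awalk_verts u p)))"
    using assms by (simp add: length_awalk_verts)
  ultimately show ?thesis by (metis nth_mem)
qed

lemma apath_start_notin_tl_verts: "apath u p v \<Longrightarrow> u \<notin> set (tl (awalk_verts u p))"
  by (cases p) (auto simp: apath_def)

lemma awalk_along_apath:
  assumes P: "apath u P v"
    and "awalk (awalk_verts u P ! i) W x" "i \<le> length P" "set W \<subseteq> set P"
  shows "W = take (length W) (drop i P)"
  using assms(2-)
proof (induction W arbitrary: i)
  case (Cons e W)
  from Cons.prems obtain j where j: "j < length P" "e = P ! j"
    by (auto simp: in_set_conv_nth)
  have cas: "cas u P v" and dist: "distinct (awalk_verts u P)"
    using P by (auto simp: apath_def awalk_def)
  have "awalk_verts u P ! j = awalk_verts u P ! i"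
    using Cons.prems(1) j by (simp add: awalk_Cons_iff awalk_verts_nth_tail)
  then have "j = i"
    using dist j Cons.prems(2) by (simp add: length_awalk_verts nth_eq_iff_index_eq)
  moreover have "awalk (awalk_verts u P ! Suc i) W x"
    using Cons.prems(1) j \<open>j = i\<close> by (simp add: awalk_Cons_iff awalk_verts_nth_head[OF cas])
  ultimately have "W = take (length W) (drop (Suc i) P)"
    using Cons.IH Cons.prems(3) j by simp
  then show ?case
    using j \<open>j = i\<close> by (subst Cons_nth_drop_Suc[symmetric]) simp_all
qed simp

lemma awalk_rotate:
  assumes "awalk u C u" shows "\<exists>x. awalk x (rotate k C) x"
proof -
  define m where "m = k mod length C"
  have "awalk (awlast u (take m C)) (drop m C @ take m C) (awlast u (take m C))"
    using assms by (metis append_take_drop_id awalk_append_iff awalk_appendI)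
  then show ?thesis unfolding m_def rotate_drop_take by blast
qed

lemma apath_append3I:
  assumes A: "apath s A u" and Q: "apath u Q v" and B: "apath v B t"
    and AB: "set (awalk_verts s A) \<inter> set (awalk_verts v B) = {}"
    and inner: "set (butlast (tl (awalk_verts u Q))) \<inter> (set (awalk_verts s A) \<union> set (awalk_verts v B)) = {}"
  shows "apath s (A @ Q @ B) t"
proof -
  let ?vA = "awalk_verts s A" and ?vQ = "awalk_verts u Q" and ?vB = "awalk_verts v B"
  have ends: "awlast s A = u" "awlast u Q = v" "hd ?vQ = u" "last ?vQ = v"
    using A Q by (auto simp: apath_def)
  have u_A: "u \<in> set ?vA" and v_B: "v \<in> set ?vB"
    using ends(1) B by (auto intro: last_in_set hd_in_awalk_verts)
  have tl_vQ: "set (tl ?vQ) \<subseteq> insert v (set (butlast (tl ?vQ)))"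
    using set_tl_subset_last_butlast[of ?vQ] ends(4) by simp
  have "set ?vQ \<inter> set (tl ?vB) = {}"
  proof -
    have "set ?vQ = insert u (set (tl ?vQ))"
      using ends(3) by (metis awalk_verts_non_Nil list.collapse list.simps(15))
    then show ?thesis
      using tl_vQ inner AB u_A apath_start_notin_tl_verts[OF B] by (auto dest: in_set_tlD)
  qed
  then have QB: "apath u (Q @ B) t"
    using Q B ends(2) by (simp add: apath_append_iff)
  have "awalk_verts u (Q @ B) = ?vQ @ tl ?vB"
    using QB ends(2) awalk_verts_append by (metis apath_def)
  then have "tl (awalk_verts u (Q @ B)) = tl ?vQ @ tl ?vB"
    by (metis awalk_verts_non_Nil tl_append2)
  then have "set ?vA \<inter> set (tl (awalk_verts u (Q @ B))) = {}"
    using tl_vQ inner AB v_B by (auto dest: in_set_tlD)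
  then show ?thesis
    using A QB ends(1) by (simp add: apath_append_iff)
qed

lemma cycle_append3I:
  assumes A: "apath w A u" and Q: "apath u Q v" and B: "apath v B w" and "Q \<noteq> []"
    and AB: "set (butlast (awalk_verts v B)) \<inter> set (awalk_verts w A) = {}"
    and inner: "set (butlast (tl (awalk_verts u Q))) \<inter> (set (awalk_verts w A) \<union> set (awalk_verts v B)) = {}"
  shows "cycle (A @ Q @ B)"
proof -
  let ?vA = "awalk_verts w A" and ?vQ = "awalk_verts u Q" and ?vB = "awalk_verts v B"
  have walks: "awalk w A u" "awalk u Q v" "awalk v B w"
    using A Q B by (simp_all add: apath_def)
  have ends: "awlast w A = u" "awlast u Q = v" "last ?vB = w"
    using walks by simp_all
  have walk: "awalk w (A @ Q @ B) w"
    using walks by (metis awalk_appendI)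
  have "awalk_verts w (A @ Q @ B) = ?vA @ tl (?vQ @ tl ?vB)"
    using walk walks ends awalk_verts_append by (metis awalk_appendI)
  then have tl_verts: "tl (awalk_verts w (A @ Q @ B)) = tl ?vA @ tl ?vQ @ tl ?vB"
    by (metis awalk_verts_non_Nil tl_append2)
  have tl_vQ: "set (tl ?vQ) \<subseteq> insert v (set (butlast (tl ?vQ)))"
    using set_tl_subset_last_butlast[of ?vQ] ends(2) by simp
  have tl_vB: "set (tl ?vB) \<subseteq> insert w (set (butlast ?vB))"
    using set_tl_subset_last_butlast[of ?vB] ends(3)
    by (auto simp: butlast_tl dest: in_set_tlD)
  have v_B: "v = w \<or> v \<in> set (butlast ?vB)"
    using walks(3) by (cases B) (auto simp: awalk_Nil_iff)
  have "set (tl ?vA) \<inter> set (tl ?vQ) = {}"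
    using tl_vQ v_B AB inner apath_start_notin_tl_verts[OF A] by (blast dest: in_set_tlD)
  moreover have "set (tl ?vA) \<inter> set (tl ?vB) = {}"
    using tl_vB AB apath_start_notin_tl_verts[OF A] by (blast dest: in_set_tlD)
  moreover have "set (tl ?vQ) \<inter> set (tl ?vB) = {}"
    using tl_vQ inner apath_start_notin_tl_verts[OF B] by (blast dest: in_set_tlD)
  ultimately have "distinct (tl ?vA @ tl ?vQ @ tl ?vB)"
    using A Q B by (auto simp: apath_def distinct_tl)
  then show ?thesis
    unfolding cycle_def using walk tl_verts \<open>Q \<noteq> []\<close> by auto
qed

lemma apath_or_cycle_through:
  assumes A: "apath s A u" and Q: "apath u Q v" and B: "apath v B t" and "Q \<noteq> []"
    and inner: "set (butlast (tl (awalk_verts u Q))) \<inter> (set (awalk_verts s A) \<union> set (awalk_verts v B)) = {}"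
  obtains "apath s (A @ Q @ B) t"
    | A1 A2 B1 B2 where "A = A1 @ A2" "B = B1 @ B2" "cycle (A2 @ Q @ B1)"
proof (cases "set (awalk_verts s A) \<inter> set (awalk_verts v B) = {}")
  case True
  then show ?thesis using apath_append3I[OF A Q B True inner] that(1) by blast
next
  case False
  let ?vA = "awalk_verts s A" and ?vB = "awalk_verts v B"
  obtain xs w ys where vB: "?vB = xs @ w # ys" "w \<in> set ?vA" "\<forall>z\<in>set xs. z \<notin> set ?vA"
    using False split_list_first_prop[of ?vB "\<lambda>z. z \<in> set ?vA"] by blast
  obtain B1 B2 where B12: "cas v B1 w" "B = B1 @ B2" "awalk_verts v B1 = xs @ [w]"
    using B vB(1) by (auto simp: apath_def awalk_def elim: awalk_decomp_verts)
  obtain A1 A2 where A12: "A = A1 @ A2" "awalk s A1 w" "awalk w A2 u"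
    using awalk_decomp A vB(2) by (metis apath_def)
  have A2: "apath w A2 u" and vA2: "set (awalk_verts w A2) \<subseteq> set ?vA"
    using A A12 by (auto simp: apath_append_iff awalk_verts_append2)
  have B1: "apath v B1 w"
    using B B12 awlast_if_cas[OF B12(1)] by (auto simp: apath_append_iff)
  have vB1: "set (awalk_verts v B1) \<subseteq> set ?vB"
    using B12(3) vB(1) by auto
  have "set (butlast (awalk_verts v B1)) \<inter> set (awalk_verts w A2) = {}"
    using B12(3) vB(3) vA2 by auto
  moreover have "set (butlast (tl (awalk_verts u Q))) \<inter> (set (awalk_verts w A2) \<union> set (awalk_verts v B1)) = {}"
    using inner vA2 vB1 by blast
  ultimately have "cycle (A2 @ Q @ B1)"
    using cycle_append3I[OF A2 Q B1 \<open>Q \<noteq> []\<close>] by blast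
  then show ?thesis using that(2) A12(1) B12(2) by blast
qed

lemma B_arc_verts:
  assumes "\<forall>P\<in>B. apath s P t" "P \<in> B" "e \<in> set P"
  shows "tail G e \<in> B_verts s B" "head G e \<in> B_verts s B"
proof -
  have "awalk s P t" using assms by (simp add: apath_def)
  then have "tail G e \<in> set (awalk_verts s P)" "head G e \<in> set (awalk_verts s P)"
    using assms(3) by (auto intro: awalk_verts_arc1 awalk_verts_arc2)
  then show "tail G e \<in> B_verts s B" "head G e \<in> B_verts s B"
    using assms(2) unfolding B_verts_def by blast+
qed

lemma B_path_split:
  assumes fam: "\<forall>P\<in>B. apath s P t" and "x \<in> B_verts s B"
  obtains P1 P2 where "P1 @ P2 \<in> B" "apath s P1 x" "apath x P2 t"
    "set (awalk_verts s P1) \<subseteq> B_verts s B" "set (awalk_verts x P2) \<subseteq> B_verts s B"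
proof -
  obtain P where P: "P \<in> B" "x \<in> set (awalk_verts s P)"
    using assms(2) unfolding B_verts_def by blast
  then have "apath s P t" using fam by blast
  moreover obtain P1 P2 where P12: "P = P1 @ P2" "awalk s P1 x" "awalk x P2 t"
    using awalk_decomp P(2) \<open>apath s P t\<close> by (metis apath_def)
  ultimately have "apath s P1 x" "apath x P2 t"
    by (auto simp: apath_append_iff)
  moreover have "set (awalk_verts s P1) \<union> set (awalk_verts x P2) \<subseteq> B_verts s B"
    using P P12 set_awalk_verts_append[OF P12(2,3)] unfolding B_verts_def by blast
  ultimately show ?thesis using that P(1) P12(1) by blast
qed

lemma jump_B_piece:
  assumes "jump s B Q" shows "B_piece s B Q"
proof -
  obtain u v where Q: "apath u Q v" "Q \<noteq> []" "u \<in> B_verts s B" "v \<in> B_verts s B"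
    and inner: "\<And>w. w \<in> set (butlast (tl (awalk_verts u Q))) \<Longrightarrow> w \<notin> B_verts s B"
    using assms unfolding jump_def by blast
  have cas: "cas u Q v" using Q(1) by (simp add: apath_def awalk_def)
  have "tail G (hd Q) = u" using cas Q(2) by (simp add: cas_simp)
  moreover have "head G (last Q) = v"
    using awlast_if_cas[OF cas] Q(2) by (simp add: awalk_verts_conv)
  moreover have "head G e \<notin> B_verts s B" if "e \<in> set (butlast Q)" for e
  proof -
    obtain i where "i < length (butlast Q)" "e = butlast Q ! i"
      using \<open>e \<in> set (butlast Q)\<close> by (metis in_set_conv_nth)
    then have "Suc i < length Q" "e = Q ! i" by (auto simp: nth_butlast)
    then show ?thesis
      using inner awalk_verts_nth_interior[of "Suc i" Q u] awalk_verts_nth_head[OF cas] by simp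
  qed
  ultimately show ?thesis using Q unfolding B_piece_def by simp
qed

lemma B_piece_disjoint_B_arcs:
  assumes fam: "\<forall>P\<in>B. apath s P t"
    and Q': "awalk a Q' b" "B_piece s B Q'" "\<not> single_B_arc B Q'"
  shows "set Q' \<inter> (\<Union>P\<in>B. set P) = {}"
proof (rule ccontr)
  assume "set Q' \<inter> (\<Union>P\<in>B. set P) \<noteq> {}"
  then obtain e P where "e \<in> set Q'" "P \<in> B" "e \<in> set P" by blast
  then have ends: "tail G e \<in> B_verts s B" "head G e \<in> B_verts s B"
    using B_arc_verts[OF fam] by auto
  have inner: "head G f \<notin> B_verts s B" if "f \<in> set (butlast Q')" for f
    using Q'(2) that by (simp add: B_piece_def)
  obtain ys f where ysf: "Q' = ys @ [f]"
    using Q'(2) by (metis B_piece_def rev_exhaust)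
  have "ys \<noteq> []"
    using ysf Q'(3) \<open>e \<in> set Q'\<close> \<open>e \<in> set P\<close> \<open>P \<in> B\<close> by (auto simp: single_B_arc_def)
  have "e \<in> set ys \<or> e = f" using ysf \<open>e \<in> set Q'\<close> by auto
  then show False
  proof
    assume "e \<in> set ys"
    then show False using inner ends ysf by simp
  next
    assume "e = f"
    have "cas (awlast a ys) [f] b" using Q'(1) ysf by (simp add: awalk_def)
    then have "tail G e = head G (last ys)"
      using \<open>e = f\<close> \<open>ys \<noteq> []\<close> by (simp add: awalk_verts_conv)
    then show False using inner ends ysf \<open>ys \<noteq> []\<close> by simp
  qed
qed

lemma B_piece_eq_jump:
  assumes fam: "\<forall>P\<in>B. apath s P t" and "jump s B Q"
    and Q': "awalk a Q' b" "B_piece s B Q'" "\<not> single_B_arc B Q'"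
    and arcs: "set Q' \<subseteq> (\<Union>P\<in>B. set P) \<union> set Q"
  shows "Q' = Q"
proof -
  obtain u v where Q: "apath u Q v" "Q \<noteq> []"
    and inner: "\<And>w. w \<in> set (butlast (tl (awalk_verts u Q))) \<Longrightarrow> w \<notin> B_verts s B"
    using \<open>jump s B Q\<close> unfolding jump_def by blast
  have cas: "cas u Q v" using Q(1) by (simp add: apath_def awalk_def)
  have "set Q' \<subseteq> set Q"
    using arcs B_piece_disjoint_B_arcs[OF fam Q'] by blast
  moreover have "Q' \<noteq> []" using Q'(2) by (simp add: B_piece_def)
  ultimately obtain i where i: "i < length Q" "hd Q' = Q ! i"
    by (metis hd_in_set in_set_conv_nth subsetD)
  have start: "awalk_verts u Q ! i = tail G (hd Q')"
    using i by (simp add: awalk_verts_nth_tail)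
  have "awalk (awalk_verts u Q ! i) Q' b"
    using Q'(1) \<open>Q' \<noteq> []\<close> start by (metis awalk_Cons_iff list.collapse)
  then have Q'_eq: "Q' = take (length Q') (drop i Q)"
    using awalk_along_apath[OF Q(1)] i \<open>set Q' \<subseteq> set Q\<close> by simp
  have "tail G (hd Q') \<in> B_verts s B" using Q'(2) by (simp add: B_piece_def)
  then have "i = 0"
    using inner awalk_verts_nth_interior[of i Q u] i start by (metis gr0I)
  then have Q'_take: "Q' = take (length Q') Q" using Q'_eq by simp
  then have len: "0 < length Q'" "length Q' \<le> length Q"
    using \<open>Q' \<noteq> []\<close> by (auto dest: arg_cong[of _ _ length])
  have "last Q' = Q ! (length Q' - 1)"
    using Q'_take len by (metis last_conv_nth \<open>Q' \<noteq> []\<close> nth_take diff_less zero_less_one)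
  moreover have "length Q' - 1 < length Q" "Suc (length Q' - 1) = length Q'"
    using len by linarith+
  ultimately have "head G (last Q') = awalk_verts u Q ! length Q'"
    using awalk_verts_nth_head[OF cas, of "length Q' - 1"] by simp
  moreover have "head G (last Q') \<in> B_verts s B" using Q'(2) by (simp add: B_piece_def)
  ultimately have "length Q' = length Q"
    using inner awalk_verts_nth_interior[of "length Q'" Q u] len by fastforce
  then show ?thesis using Q'_take by simp
qed

lemma jump_in_J_path:
  assumes "jump s B Q" shows "Q \<in> J_path s B (xs @ Q @ ys)"
  using jump_B_piece[OF assms] assms unfolding J_path_def jump_def by blast

lemma J_path_subset_jump:
  assumes fam: "\<forall>P\<in>B. apath s P t" and jmp: "jump s B Q"
    and "awalk x W y" "set W \<subseteq> (\<Union>P\<in>B. set P) \<union> set Q"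
  shows "J_path s B W \<subseteq> {Q}"
proof
  fix Q' assume "Q' \<in> J_path s B W"
  then obtain xs ys where Q': "W = xs @ Q' @ ys" "B_piece s B Q'" "\<not> single_B_arc B Q'"
    unfolding J_path_def by blast
  have "awalk (awlast x xs) Q' (awlast (awlast x xs) Q')"
    using assms(3) Q'(1) by simp
  moreover have "set Q' \<subseteq> (\<Union>P\<in>B. set P) \<union> set Q"
    using assms(4) Q'(1) by auto
  ultimately show "Q' \<in> {Q}"
    using B_piece_eq_jump[OF fam jmp] Q'(2,3) by blast
qed

lemma J_cycle_eq_UN_J_path: "J_cycle s B C = (\<Union>k. J_path s B (rotate k C))"
  unfolding J_cycle_def J_path_def by blast

lemma jump_in_J_cycle:
  assumes "jump s B Q" shows "Q \<in> J_cycle s B (xs @ Q @ ys)"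
  using jump_in_J_path[OF assms, of xs ys] unfolding J_cycle_eq_UN_J_path
  by (metis UN_I UNIV_I rotate0 id_apply)

lemma J_cycle_subset_jump:
  assumes fam: "\<forall>P\<in>B. apath s P t" and jmp: "jump s B Q"
    and "awalk x C x" "set C \<subseteq> (\<Union>P\<in>B. set P) \<union> set Q"
  shows "J_cycle s B C \<subseteq> {Q}"
proof -
  have "J_path s B (rotate k C) \<subseteq> {Q}" for k
  proof -
    obtain y where "awalk y (rotate k C) y"
      using awalk_rotate[OF assms(3)] by blast
    then show ?thesis
      using J_path_subset_jump[OF fam jmp] assms(4) by simp
  qed
  then show ?thesis unfolding J_cycle_eq_UN_J_path by blast
qed

end

theorem lemma3:
  fixes G :: "('a, 'b) pre_digraph" and s t :: 'a and N :: "'b set" and B :: "'b list set"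
    and Q :: "'b list"
  assumes "fin_digraph G"
    and "s \<in> verts G" and "t \<in> verts G"
    and "N \<subseteq> arcs G"
    and "\<forall>e\<in>arcs G. \<exists>P. pre_digraph.apath G s P t \<and> e \<in> set P"
    and "\<forall>P. pre_digraph.apath G s P t \<longrightarrow> set P \<inter> N \<noteq> {}"
    and "pre_digraph.max_N_disj_family G s t N B"
    and "pre_digraph.jump G s B Q"
  shows "(\<exists>P. pre_digraph.apath G s P t \<and> pre_digraph.J_path G s B P = {Q})
       \<or> (\<exists>C. pre_digraph.cycle G C \<and> pre_digraph.J_cycle G s B C = {Q})"
proof -
  interpret fin_digraph G by (rule assms(1))
  let ?Bv = "B_verts s B" and ?BA = "\<Union>P\<in>B. set P"
  have fam: "\<forall>P\<in>B. apath s P t"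
    using assms(7) unfolding max_N_disj_family_def N_disj_family_def by blast
  obtain u v where Q: "apath u Q v" "Q \<noteq> []" "u \<in> ?Bv" "v \<in> ?Bv"
    and inner: "\<forall>w\<in>set (butlast (tl (awalk_verts u Q))). w \<notin> ?Bv"
    using assms(8) unfolding jump_def by blast
  obtain A A' where A: "A @ A' \<in> B" "apath s A u" "set (awalk_verts s A) \<subseteq> ?Bv"
    using B_path_split[OF fam Q(3)] by metis
  obtain Z' Z where Z: "Z' @ Z \<in> B" "apath v Z t" "set (awalk_verts v Z) \<subseteq> ?Bv"
    using B_path_split[OF fam Q(4)] by metis
  have inner': "set (butlast (tl (awalk_verts u Q))) \<inter> (set (awalk_verts s A) \<union> set (awalk_verts v Z)) = {}"
    using inner A(3) Z(3) by blast
  have arcs: "set A \<union> set Z \<subseteq> ?BA" using A(1) Z(1) by auto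
  show ?thesis
  proof (cases rule: apath_or_cycle_through[OF A(2) Q(1) Z(2) Q(2) inner'])
    case 1
    then have "awalk s (A @ Q @ Z) t" unfolding apath_def by (rule conjunct1)
    then have "J_path s B (A @ Q @ Z) \<subseteq> {Q}"
      by (rule J_path_subset_jump[OF fam assms(8)]) (use arcs in auto)
    then show ?thesis using 1 jump_in_J_path[OF assms(8)] by blast
  next
    case (2 A1 A2 Z1 Z2)
    then obtain x where "awalk x (A2 @ Q @ Z1) x" unfolding cycle_def by blast
    then have "J_cycle s B (A2 @ Q @ Z1) \<subseteq> {Q}"
      by (rule J_cycle_subset_jump[OF fam assms(8)]) (use arcs 2 in auto)
    then show ?thesis using 2 jump_in_J_cycle[OF assms(8)] by blast
  qed
qed

end
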